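(* Assume $Ee^{\alpha X_1}<\infty$ and fix $T>0$. Let $\tilde Z$ be a $D$-valued random element with law $P(\tilde Z\in dw)=\mu^T(dw)/\mu^T(\mathcal D)$, where $$\mu^T(dw)=\int_0^T E\big(e^{\alpha X_{t-}};\,X_{[0,t)}\in dw\big)\,dt,\qquad \mu^T(\mathcal D)=\int_0^T Ee^{\alpha X_t}\,dt.$$ Let $Z$ be the Esscher transform of $X$, i.e. the process such that for every $s\ge0$ and every Borel set $B_s\subset\mathbb R^{[0,s]}$, $P(\{Z_v:0\le v\le s\}\in B_s)=e^{-\psi(\alpha)s}E(e^{\alpha X_s};\{X_v:0\le v\le s\}\in B_s)$, and let $\tau$ be independent of $Z$ with $P(\tau\in dt)=I(0\le t<T)e^{\psi(\alpha)t}dt/\mu^T(\mathcal D)$. Then $$\{\tilde Z_t:t<\tau_\Delta(\tilde Z)\}\overset{d}{=}\{Z_t:t<\tau\}.$$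
   Context: $\alpha>0$; $X$ is a real-valued Lévy process realized as the coordinate process on the Skorohod space $D$ of right-continuous paths with left limits taking values in $\mathbb R\cup\{\Delta\}$ ($\Delta$ an isolated cemetery point); $\psi(\alpha)=\ln Ee^{\alpha X_1}$. For $w\in D$, $\tau_\Delta(w)=\inf\{t>0:w_t=\Delta\}$, and the killed path $w_{[0,r)}$ equals $w_t$ for $t<r$ and $\Delta$ for $t\ge r$. *)

theory Defs
  imports "HOL-Probability.Probability"
begin

text \<open>State space R \<union> {Delta}: Delta is modelled by None, a real x by Some x.
  Delta is isolated; measurable sets are generated by Borel sets of reals and {Delta}.\<close>

definition state_M :: "real option measure" where
  "state_M = sigma UNIV (insert {None} ((\<lambda>B. Some ` B) ` sets borel))"

text \<open>Path space: paths indexed by time [0,\<infinity>), product (cylinder) sigma algebra,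
  which on D coincides with the Borel sigma algebra of the Skorohod topology.\<close>

definition path_M :: "(real \<Rightarrow> real option) measure" where
  "path_M = PiM {0..} (\<lambda>_. state_M)"

definition opt_tendsto :: "(real \<Rightarrow> real option) \<Rightarrow> real option \<Rightarrow> real filter \<Rightarrow> bool" where
  "opt_tendsto f l F \<longleftrightarrow>
     (case l of
        None \<Rightarrow> eventually (\<lambda>s. f s = None) F
      | Some x \<Rightarrow> eventually (\<lambda>s. f s \<noteq> None) F \<and> ((\<lambda>s. the (f s)) \<longlongrightarrow> x) F)"

definition D_set :: "(real \<Rightarrow> real option) set" where
  "D_set = {w \<in> extensional {0..}.
     (\<forall>t\<ge>0. opt_tendsto w (w t) (at_right t)) \<and>
     (\<forall>t>0. \<exists>l. opt_tendsto w l (at_left t))}"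

definition tau_Delta :: "(real \<Rightarrow> real option) \<Rightarrow> ereal" where
  "tau_Delta w = Inf {ereal t | t. t > 0 \<and> w t = None}"

definition kill :: "(real \<Rightarrow> real option) \<Rightarrow> ereal \<Rightarrow> (real \<Rightarrow> real option)" where
  "kill w r = (\<lambda>t\<in>{0..}. if ereal t < r then w t else None)"

definition path_of :: "(real \<Rightarrow> 'a \<Rightarrow> real) \<Rightarrow> 'a \<Rightarrow> (real \<Rightarrow> real option)" where
  "path_of X \<omega> = (\<lambda>t\<in>{0..}. Some (X t \<omega>))"

definition leftlim :: "(real \<Rightarrow> real) \<Rightarrow> real \<Rightarrow> real" where
  "leftlim f t = (if t \<le> 0 then f t else Lim (at_left t) f)"

definition levy_process :: "'a measure \<Rightarrow> (real \<Rightarrow> 'a \<Rightarrow> real) \<Rightarrow> bool" where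
  "levy_process M X \<longleftrightarrow>
     prob_space M \<and>
     (\<forall>t\<ge>0. X t \<in> borel_measurable M) \<and>
     (AE \<omega> in M. X 0 \<omega> = 0) \<and>
     (\<forall>\<omega>\<in>space M.
        (\<forall>t\<ge>0. continuous (at_right t) (\<lambda>s. X s \<omega>)) \<and>
        (\<forall>t>0. \<exists>l. ((\<lambda>s. X s \<omega>) \<longlongrightarrow> l) (at_left t))) \<and>
     (\<forall>s t. 0 \<le> s \<longrightarrow> 0 \<le> t \<longrightarrow>
        distr M borel (\<lambda>\<omega>. X (s + t) \<omega> - X s \<omega>) = distr M borel (X t)) \<and>
     (\<forall>(n::nat) (u::nat \<Rightarrow> real). 0 \<le> u 0 \<longrightarrow> (\<forall>i<n. u i \<le> u (Suc i)) \<longrightarrow>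
        prob_space.indep_vars M (\<lambda>_. borel) (\<lambda>i \<omega>. X (u (Suc i)) \<omega> - X (u i) \<omega>) {..<n})"

definition levy_psi :: "'a measure \<Rightarrow> (real \<Rightarrow> 'a \<Rightarrow> real) \<Rightarrow> real \<Rightarrow> real" where
  "levy_psi M X \<alpha> = ln (\<integral>\<omega>. exp (\<alpha> * X 1 \<omega>) \<partial>M)"

definition muT :: "'a measure \<Rightarrow> (real \<Rightarrow> 'a \<Rightarrow> real) \<Rightarrow> real \<Rightarrow> real
                  \<Rightarrow> (real \<Rightarrow> real option) set \<Rightarrow> ennreal" where
  "muT M X \<alpha> T A = (\<integral>\<^sup>+ t\<in>{0..T}. (\<integral>\<^sup>+ \<omega>. ennreal (exp (\<alpha> * leftlim (\<lambda>s. X s \<omega>) t))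
        * indicator A (kill (path_of X \<omega>) (ereal t)) \<partial>M) \<partial>lborel)"

definition muT_total :: "'a measure \<Rightarrow> (real \<Rightarrow> 'a \<Rightarrow> real) \<Rightarrow> real \<Rightarrow> real \<Rightarrow> ennreal" where
  "muT_total M X \<alpha> T = (\<integral>\<^sup>+ t\<in>{0..T}. (\<integral>\<^sup>+ \<omega>. ennreal (exp (\<alpha> * X t \<omega>)) \<partial>M) \<partial>lborel)"

end

theory Submission
  imports Defs
begin

text \<open>On the left, mu^T lives on
  killed cadlag paths, which killing at their lifetime leaves unchanged, so killing does not
  alter the law mu^T / mu^T(D); and a Levy process has no fixed jump times, so X_{t-} may be
  replaced by X_t. On the right, independence of tau and Z gives the integral over t of the
  density of tau times P(Z_[0,t) \<in> A), and the Esscher identity at time t cancels the factor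
  e^{psi t} of the density. Both sides become int_0^T E(e^{alpha X_t}; X_[0,t) \<in> A) dt / mu^T(D).\<close>

lemma space_state_M [simp]: "space state_M = UNIV"
  unfolding state_M_def by simp

lemma sets_state_M_None [measurable]: "{None} \<in> sets state_M"
  unfolding state_M_def by simp

lemma measurable_Some_state_M [measurable]: "Some \<in> measurable borel state_M"
  unfolding state_M_def
proof (rule measurable_measure_of)
  fix y :: "real option set" assume "y \<in> insert {None} ((\<lambda>B. Some ` B) ` sets borel)"
  then consider "y = {None}" | B where "B \<in> sets borel" "y = Some ` B" by blast
  then show "Some -` y \<inter> space borel \<in> sets borel"
  proof cases
    case 1
    then have "Some -` y \<inter> space borel = {}" by auto
    then show ?thesis by simp
  next
    case 2
    then show ?thesis by (simp add: inj_vimage_image_eq)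
  qed
qed (simp_all add: Pi_iff)

lemma space_path_M: "space path_M = PiE {0..} (\<lambda>_. UNIV)"
  unfolding path_M_def by (simp add: space_PiM)

lemma measurable_path_M_component [measurable]:
  "u \<ge> 0 \<Longrightarrow> (\<lambda>w. w u) \<in> measurable path_M state_M"
  unfolding path_M_def by (rule measurable_component_singleton) simp

lemma pred_eq_None [measurable]:
  "f \<in> measurable M state_M \<Longrightarrow> Measurable.pred M (\<lambda>x. f x = None)"
  unfolding pred_def using measurable_sets[of f M state_M "{None}"]
  by (simp add: vimage_def Int_def conj_commute)

lemma D_set_right_locally_constant_None:
  assumes "w \<in> D_set" "u \<ge> 0"
  shows "\<exists>c>u. \<forall>v. u < v \<and> v < c \<longrightarrow> (w v = None \<longleftrightarrow> w u = None)"
proof -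
  from assms have "opt_tendsto w (w u) (at_right u)" unfolding D_set_def by auto
  then have "eventually (\<lambda>v. w v = None \<longleftrightarrow> w u = None) (at_right u)"
    by (cases "w u") (auto simp: opt_tendsto_def elim: eventually_mono)
  then show ?thesis unfolding eventually_at_right_field by blast
qed

definition alive_upto_rat :: "real \<Rightarrow> (real \<Rightarrow> real option) \<Rightarrow> bool" where
  "alive_upto_rat s w \<longleftrightarrow>
     w s \<noteq> None \<and> (\<forall>q::rat. 0 < real_of_rat q \<and> real_of_rat q \<le> s \<longrightarrow> w (real_of_rat q) \<noteq> None)"

lemma pred_alive_upto_rat [measurable]:
  "s \<ge> 0 \<Longrightarrow> Measurable.pred path_M (alive_upto_rat s)"
  unfolding alive_upto_rat_def by measurable

lemma tau_Delta_le: "0 < u \<Longrightarrow> w u = None \<Longrightarrow> tau_Delta w \<le> ereal u"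
  unfolding tau_Delta_def by (auto intro!: Inf_lower)

lemma le_tau_Delta: "(\<And>u. 0 < u \<Longrightarrow> w u = None \<Longrightarrow> c \<le> u) \<Longrightarrow> ereal c \<le> tau_Delta w"
  unfolding tau_Delta_def by (auto intro!: Inf_greatest)

lemma alive_before_tau_Delta:
  assumes "ereal s < tau_Delta w" "0 < u" "u \<le> s"
  shows "w u \<noteq> None"
proof
  assume "w u = None"
  then have "tau_Delta w \<le> ereal s"
    using tau_Delta_le[of u w] assms(2,3) by (simp add: order_trans)
  with assms(1) show False by simp
qed

text \<open>On cadlag paths, survival up to time s can be tested at countably many times, so the
  lifetime is measurable although its definition involves uncountably many coordinates.\<close>

lemma less_tau_Delta_iff_alive_upto_rat:
  assumes w: "w \<in> D_set" and s: "s \<ge> 0"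
  shows "ereal s < tau_Delta w \<longleftrightarrow> alive_upto_rat s w"
proof
  assume lt: "ereal s < tau_Delta w"
  then obtain r where "ereal s < ereal r" and r: "ereal r < tau_Delta w"
    using ereal_dense2 by blast
  then have "s < r" by simp
  have "w s \<noteq> None"
  proof
    assume "w s = None"
    then obtain c where c: "c > s" "\<forall>v. s < v \<and> v < c \<longrightarrow> w v = None"
      using D_set_right_locally_constant_None[OF w s] by auto
    define v where "v = (s + min c r) / 2"
    have "s < v" "v < c" "v \<le> r" using c \<open>s < r\<close> by (auto simp: v_def)
    then show False
      using c alive_before_tau_Delta[OF r, of v] s by auto
  qed
  then show "alive_upto_rat s w"
    using alive_before_tau_Delta[OF lt] unfolding alive_upto_rat_def by blast
next
  assume "alive_upto_rat s w"
  then have ws: "w s \<noteq> None"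
    and wq: "\<And>q. 0 < real_of_rat q \<Longrightarrow> real_of_rat q \<le> s \<Longrightarrow> w (real_of_rat q) \<noteq> None"
    unfolding alive_upto_rat_def by auto
  obtain c where c: "c > s" "\<forall>v. s < v \<and> v < c \<longrightarrow> w v \<noteq> None"
    using D_set_right_locally_constant_None[OF w s] ws by auto
  have "c \<le> u" if u: "0 < u" "w u = None" for u
  proof (rule ccontr)
    assume "\<not> c \<le> u"
    with c u ws have "u < s" by (metis linorder_neqE_linordered_idom not_le)
    obtain c' where c': "c' > u" "\<forall>v. u < v \<and> v < c' \<longrightarrow> w v = None"
      using D_set_right_locally_constant_None[OF w, of u] u by auto
    obtain q where q: "u < real_of_rat q" "real_of_rat q < min c' s"
      using of_rat_dense[of u "min c' s"] c' \<open>u < s\<close> by auto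
    moreover have "0 < real_of_rat q" using q u by linarith
    ultimately show False using wq[of q] c' by auto
  qed
  then have "ereal c \<le> tau_Delta w" by (rule le_tau_Delta)
  moreover have "ereal s < ereal c" using c by simp
  ultimately show "ereal s < tau_Delta w" by (rule order_less_le_trans[rotated])
qed

lemma D_set_subset_space_path_M: "D_set \<subseteq> space path_M"
  unfolding space_path_M D_set_def PiE_def by auto

lemma measurable_kill_tau_Delta:
  "(\<lambda>w. kill w (tau_Delta w)) \<in> measurable (restrict_space path_M D_set) path_M"
  unfolding kill_def path_M_def
proof (rule measurable_restrict)
  fix t :: real assume t: "t \<in> {0..}"
  have "(\<lambda>w. if alive_upto_rat t w then w t else None) \<in> measurable path_M state_M"
    using t by (intro measurable_If) (auto simp: pred_def[symmetric])
  then have "(\<lambda>w. if alive_upto_rat t w then w t else None)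
      \<in> measurable (restrict_space path_M D_set) state_M"
    by (rule measurable_restrict_space1)
  then show "(\<lambda>w. if ereal t < tau_Delta w then w t else None)
      \<in> measurable (restrict_space (Pi\<^sub>M {0..} (\<lambda>_. state_M)) D_set) state_M"
    unfolding path_M_def
    by (rule measurable_cong[THEN iffD1, rotated])
      (use t in \<open>auto simp: space_restrict_space less_tau_Delta_iff_alive_upto_rat\<close>)
qed

lemma opt_tendsto_Some: "(f \<longlongrightarrow> l) F \<Longrightarrow> opt_tendsto (\<lambda>s. Some (f s)) (Some l) F"
  by (simp add: opt_tendsto_def)

lemma opt_tendsto_None: "opt_tendsto (\<lambda>s. None) None F"
  by (simp add: opt_tendsto_def)

lemma opt_tendsto_eventually_cong:
  assumes "eventually (\<lambda>s. f s = g s) F" "opt_tendsto g l F"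
  shows "opt_tendsto f l F"
proof (cases l)
  case None
  with assms show ?thesis
    unfolding opt_tendsto_def by (auto elim: eventually_elim2)
next
  case (Some x)
  from assms(1) have "eventually (\<lambda>s. the (f s) = the (g s)) F" by (rule eventually_mono) simp
  with assms Some show ?thesis
    unfolding opt_tendsto_def by (auto elim: eventually_elim2 tendsto_cong[THEN iffD2, rotated])
qed

lemma kill_lift_apply:
  "u \<ge> 0 \<Longrightarrow> kill (\<lambda>s\<in>{0..}. Some (f s)) (ereal t) u = (if u < t then Some (f u) else None)"
  by (simp add: kill_def)

lemma kill_cadlag_in_D_set:
  fixes f :: "real \<Rightarrow> real"
  assumes rc: "\<forall>u\<ge>0. continuous (at_right u) f"
    and ll: "\<forall>u>0. \<exists>l. (f \<longlongrightarrow> l) (at_left u)"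
    and t: "t \<ge> 0"
  shows "kill (\<lambda>s\<in>{0..}. Some (f s)) (ereal t) \<in> D_set"
proof -
  define k where "k = kill (\<lambda>s\<in>{0..}. Some (f s)) (ereal t)"
  have right: "opt_tendsto k (k u) (at_right u)" if u: "u \<ge> 0" for u
  proof (cases "u < t")
    case True
    have "eventually (\<lambda>v. k v = Some (f v)) (at_right u)"
      unfolding eventually_at_right_field k_def using True u
      by (intro exI[of _ t]) (auto simp: kill_lift_apply)
    moreover have "(f \<longlongrightarrow> f u) (at_right u)" using rc u by (simp add: continuous_within)
    ultimately show ?thesis
      using True u by (auto simp: k_def kill_lift_apply intro: opt_tendsto_eventually_cong opt_tendsto_Some)
  next
    case False
    have "eventually (\<lambda>v. k v = None) (at_right u)"
      unfolding eventually_at_right_field k_def using False u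
      by (intro exI[of _ "u + 1"]) (auto simp: kill_lift_apply)
    then show ?thesis
      using False u by (auto simp: k_def kill_lift_apply intro: opt_tendsto_eventually_cong opt_tendsto_None)
  qed
  have left: "\<exists>l. opt_tendsto k l (at_left u)" if u: "u > 0" for u
  proof (cases "u \<le> t")
    case True
    obtain l where lim: "(f \<longlongrightarrow> l) (at_left u)" using ll u by blast
    have "eventually (\<lambda>v. k v = Some (f v)) (at_left u)"
      unfolding eventually_at_left_field k_def using True u
      by (intro exI[of _ 0]) (auto simp: kill_lift_apply)
    then show ?thesis using opt_tendsto_eventually_cong[OF _ opt_tendsto_Some[OF lim]] by blast
  next
    case False
    have "eventually (\<lambda>v. k v = None) (at_left u)"
      unfolding eventually_at_left_field k_def using False t
      by (intro exI[of _ t]) (auto simp: kill_lift_apply)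
    then show ?thesis using opt_tendsto_eventually_cong[OF _ opt_tendsto_None] by blast
  qed
  have "k \<in> extensional {0..}" unfolding k_def kill_def by simp
  with right left show ?thesis unfolding D_set_def k_def[symmetric] by auto
qed

lemma kill_tau_Delta_kill_lift:
  fixes f :: "real \<Rightarrow> real"
  assumes t: "t \<ge> 0"
  defines "k \<equiv> kill (\<lambda>s\<in>{0..}. Some (f s)) (ereal t)"
  shows "kill k (tau_Delta k) = k"
proof -
  have "ereal t \<le> tau_Delta k"
    by (rule le_tau_Delta) (auto simp: k_def kill_lift_apply split: if_splits)
  then have "ereal u < tau_Delta k" if "u < t" for u
    using that order_less_le_trans[of "ereal u" "ereal t"] by simp
  then show ?thesis
    unfolding kill_def[of k] by (auto simp: k_def kill_def)
qed

lemma measurable_kill_lift: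
  assumes r: "r \<in> borel_measurable M"
    and f: "\<And>s. 0 \<le> s \<Longrightarrow> (\<exists>x\<in>space M. s < r x) \<Longrightarrow> (\<lambda>x. f x s) \<in> borel_measurable M"
  shows "(\<lambda>x. kill (\<lambda>s\<in>{0..}. Some (f x s)) (ereal (r x))) \<in> measurable M path_M"
proof -
  have "(\<lambda>x. \<lambda>s\<in>{0..}. if s < r x then Some (f x s) else None) \<in> measurable M path_M"
    unfolding path_M_def
  proof (rule measurable_restrict)
    fix s :: real assume s: "s \<in> {0..}"
    show "(\<lambda>x. if s < r x then Some (f x s) else None) \<in> measurable M state_M"
    proof (cases "\<exists>x\<in>space M. s < r x")
      case True
      with s f have "(\<lambda>x. f x s) \<in> borel_measurable M" by simp
      then have "(\<lambda>x. Some (f x s)) \<in> measurable M state_M" by measurable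
      with r show ?thesis by measurable
    next
      case False
      then have "(\<lambda>x. if s < r x then Some (f x s) else None) \<in> measurable M state_M
          \<longleftrightarrow> (\<lambda>_. None) \<in> measurable M state_M"
        by (intro measurable_cong) auto
      then show ?thesis by simp
    qed
  qed
  moreover have "kill (\<lambda>s\<in>{0..}. Some (f x s)) (ereal (r x))
      = (\<lambda>s\<in>{0..}. if s < r x then Some (f x s) else None)" for x
    by (auto simp: kill_def)
  ultimately show ?thesis by simp
qed

lemma measurable_kill_lift_PiM:
  "(\<lambda>v. kill (\<lambda>s\<in>{0..}. Some (v s)) (ereal t))
     \<in> measurable (PiM {0..t} (\<lambda>_. (borel :: real measure))) path_M"
  by (rule measurable_kill_lift) (auto intro!: measurable_component_singleton)

lemma measurable_kill_lift_pair:
  "(\<lambda>p. kill (\<lambda>s\<in>{0..}. Some (snd p s)) (ereal (fst p)))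
     \<in> measurable (borel \<Otimes>\<^sub>M PiM {0..} (\<lambda>_. (borel :: real measure))) path_M"
  by (rule measurable_kill_lift) (auto intro!: measurable_component_singleton measurable_compose[OF measurable_snd])

lemma kill_lift_restrict:
  "t \<ge> 0 \<Longrightarrow> kill (\<lambda>s\<in>{0..}. Some (restrict f {0..t} s)) (ereal t)
     = kill (\<lambda>s\<in>{0..}. Some (f s)) (ereal t)"
  by (auto simp: kill_def)

lemma (in finite_measure) tendsto_integral_bounded_continuous:
  fixes g :: "real \<Rightarrow> real"
  assumes g: "continuous_on UNIV g" "\<And>x. \<bar>g x\<bar> \<le> B"
    and Y: "\<And>n. Y n \<in> borel_measurable M" "Y' \<in> borel_measurable M"
    and lim: "AE \<omega> in M. (\<lambda>n. Y n \<omega>) \<longlonglongrightarrow> Y' \<omega>"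
  shows "(\<lambda>n. \<integral>\<omega>. g (Y n \<omega>) \<partial>M) \<longlonglongrightarrow> (\<integral>\<omega>. g (Y' \<omega>) \<partial>M)"
proof (rule integral_dominated_convergence[where w="\<lambda>_. B"])
  have g_meas: "g \<in> borel_measurable borel" using g(1) by (rule borel_measurable_continuous_onI)
  show "(\<lambda>\<omega>. g (Y' \<omega>)) \<in> borel_measurable M" "\<And>n. (\<lambda>\<omega>. g (Y n \<omega>)) \<in> borel_measurable M"
    using Y g_meas by (auto intro: measurable_compose)
  show "AE \<omega> in M. (\<lambda>n. g (Y n \<omega>)) \<longlonglongrightarrow> g (Y' \<omega>)"
    using lim by eventually_elim (rule continuous_on_tendsto_compose[OF g(1)], auto)
qed (use g(2) in auto)

lemma integral_comp_eq_if_distr_eq: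
  fixes U V :: "'a \<Rightarrow> real" and g :: "real \<Rightarrow> real"
  assumes "distr M borel U = distr M borel V"
    and "U \<in> borel_measurable M" "V \<in> borel_measurable M" "g \<in> borel_measurable borel"
  shows "(\<integral>\<omega>. g (U \<omega>) \<partial>M) = (\<integral>\<omega>. g (V \<omega>) \<partial>M)"
  using assms integral_distr[of U M borel g] integral_distr[of V M borel g] by simp

lemma (in finite_measure) AE_eq_0_if_integral_min_abs_1_eq_0:
  fixes D :: "'a \<Rightarrow> real"
  assumes D: "D \<in> borel_measurable M" and zero: "(\<integral>\<omega>. min \<bar>D \<omega>\<bar> 1 \<partial>M) = 0"
  shows "AE \<omega> in M. D \<omega> = 0"
proof -
  have "integrable M (\<lambda>\<omega>. min \<bar>D \<omega>\<bar> 1)"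
    using D by (intro integrable_const_bound[where B=1]) auto
  with zero have "AE \<omega> in M. min \<bar>D \<omega>\<bar> 1 = 0"
    by (subst (asm) integral_nonneg_eq_0_iff_AE) auto
  then show ?thesis by eventually_elim (auto simp: min_def split: if_splits)
qed

text \<open>The left limit at t is the a.s. limit of X t - X(t - h), which by stationarity has the
  law of X h, and X h tends to 0 a.s. by right-continuity at 0. Testing against the bounded
  continuous function min |x| 1 turns these convergences into limits of integrals.\<close>

lemma leftlim_AE_eq_stationary_increments:
  assumes "prob_space M"
    and meas: "\<And>s. 0 \<le> s \<Longrightarrow> X s \<in> borel_measurable M"
    and X0: "AE \<omega> in M. X 0 \<omega> = 0"
    and rc0: "\<And>\<omega>. \<omega> \<in> space M \<Longrightarrow> continuous (at_right 0) (\<lambda>s. X s \<omega>)"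
    and ll: "\<And>\<omega>. \<omega> \<in> space M \<Longrightarrow> \<exists>l. ((\<lambda>s. X s \<omega>) \<longlongrightarrow> l) (at_left t)"
    and stat: "\<And>s h. 0 \<le> s \<Longrightarrow> 0 \<le> h \<Longrightarrow>
        distr M borel (\<lambda>\<omega>. X (s + h) \<omega> - X s \<omega>) = distr M borel (X h)"
    and t: "t > 0"
  shows "AE \<omega> in M. leftlim (\<lambda>s. X s \<omega>) t = X t \<omega>"
proof -
  interpret prob_space M by fact
  define g :: "real \<Rightarrow> real" where "g x = min \<bar>x\<bar> 1" for x
  have g_cont: "continuous_on UNIV g" unfolding g_def by (intro continuous_intros)
  have g_bound: "\<bar>g x\<bar> \<le> 1" for x by (simp add: g_def)
  note g = g_cont g_bound
  define h where "h n = t / real (Suc (Suc n))" for n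
  have h_pos: "0 < h n" and h_less: "h n < t" for n
    using t by (auto simp: h_def divide_less_eq)
  have "h \<longlonglongrightarrow> 0" unfolding h_def using lim_const_over_n[of t] by (intro LIMSEQ_Suc)
  then have h_right: "filterlim h (at_right 0) sequentially"
    and h_left: "filterlim (\<lambda>n. t - h n) (at_left t) sequentially"
    using h_pos h_less
    by (auto simp: filterlim_at less_imp_neq[symmetric] intro!: always_eventually tendsto_eq_intros)
  have X_left: "(\<lambda>n. X (t - h n) \<omega>) \<longlonglongrightarrow> leftlim (\<lambda>s. X s \<omega>) t" if \<omega>: "\<omega> \<in> space M" for \<omega>
  proof -
    obtain l where l: "((\<lambda>s. X s \<omega>) \<longlongrightarrow> l) (at_left t)" using ll[OF \<omega>] by blast
    then have "leftlim (\<lambda>s. X s \<omega>) t = l" using t by (simp add: leftlim_def tendsto_Lim)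
    with filterlim_compose[OF l h_left] show ?thesis by simp
  qed
  have meas_h: "X (h n) \<in> borel_measurable M" "X (t - h n) \<in> borel_measurable M" for n
    using h_pos[of n] h_less[of n] by (auto intro!: meas)
  have meas_t: "X t \<in> borel_measurable M" using t by (auto intro!: meas)
  have meas_leftlim: "(\<lambda>\<omega>. leftlim (\<lambda>s. X s \<omega>) t) \<in> borel_measurable M"
    using X_left meas_h(2) by (rule borel_measurable_LIMSEQ_real)
  have "(\<lambda>n. \<integral>\<omega>. g (X (h n) \<omega>) \<partial>M) \<longlonglongrightarrow> (\<integral>\<omega>. g 0 \<partial>M)"
  proof (rule tendsto_integral_bounded_continuous[OF g meas_h(1)])
    show "AE \<omega> in M. (\<lambda>n. X (h n) \<omega>) \<longlonglongrightarrow> 0"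
      using X0 AE_space
    proof eventually_elim
      case (elim \<omega>)
      have "((\<lambda>s. X s \<omega>) \<longlongrightarrow> X 0 \<omega>) (at_right 0)"
        using rc0[OF elim(2)] by (simp add: continuous_within)
      from filterlim_compose[OF this h_right] elim(1) show ?case by simp
    qed
  qed simp
  moreover have "(\<integral>\<omega>. g (X t \<omega> - X (t - h n) \<omega>) \<partial>M) = (\<integral>\<omega>. g (X (h n) \<omega>) \<partial>M)" for n
    using stat[of "t - h n" "h n"] h_pos[of n] h_less[of n] meas_t meas_h
      borel_measurable_continuous_onI[OF g(1)]
    by (intro integral_comp_eq_if_distr_eq) auto
  moreover have "(\<lambda>n. \<integral>\<omega>. g (X t \<omega> - X (t - h n) \<omega>) \<partial>M)
      \<longlonglongrightarrow> (\<integral>\<omega>. g (X t \<omega> - leftlim (\<lambda>s. X s \<omega>) t) \<partial>M)"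
    using g meas_t meas_h meas_leftlim X_left
    by (intro tendsto_integral_bounded_continuous) (auto intro!: tendsto_diff)
  ultimately have "(\<integral>\<omega>. g (X t \<omega> - leftlim (\<lambda>s. X s \<omega>) t) \<partial>M) = 0"
    using LIMSEQ_unique by (simp add: g_def)
  then have "AE \<omega> in M. X t \<omega> - leftlim (\<lambda>s. X s \<omega>) t = 0"
    using meas_t meas_leftlim by (intro AE_eq_0_if_integral_min_abs_1_eq_0) (auto simp: g_def)
  then show ?thesis by eventually_elim simp
qed

lemma levy_process_leftlim_AE:
  assumes levy: "levy_process M X" and t: "t \<ge> 0"
  shows "AE \<omega> in M. leftlim (\<lambda>s. X s \<omega>) t = X t \<omega>"
proof (cases "t = 0")
  case True
  then show ?thesis by (simp add: leftlim_def)
next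
  case False
  with t levy show ?thesis
    unfolding levy_process_def by (intro leftlim_AE_eq_stationary_increments) auto
qed

lemma muT_eq_integral_value:
  assumes "levy_process M X"
  shows "muT M X \<alpha> T A = (\<integral>\<^sup>+ t\<in>{0..T}. (\<integral>\<^sup>+ \<omega>. ennreal (exp (\<alpha> * X t \<omega>))
      * indicator A (kill (path_of X \<omega>) (ereal t)) \<partial>M) \<partial>lborel)"
  unfolding muT_def
proof (rule nn_integral_cong)
  fix t :: real
  show "(\<integral>\<^sup>+ \<omega>. ennreal (exp (\<alpha> * leftlim (\<lambda>s. X s \<omega>) t)) * indicator A (kill (path_of X \<omega>) (ereal t)) \<partial>M)
      * indicator {0..T} t
    = (\<integral>\<^sup>+ \<omega>. ennreal (exp (\<alpha> * X t \<omega>)) * indicator A (kill (path_of X \<omega>) (ereal t)) \<partial>M)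
      * indicator {0..T} t"
  proof (cases "t \<ge> 0")
    case True
    then show ?thesis
      using levy_process_leftlim_AE[OF assms True]
      by (intro arg_cong2[where f="(*)"] nn_integral_cong_AE refl) (auto elim: eventually_mono)
  qed simp
qed

lemma path_of_eq_lift: "path_of X \<omega> = (\<lambda>s\<in>{0..}. Some (X s \<omega>))"
  by (simp add: path_of_def)

text \<open>mu^T only charges killed cadlag paths, which are fixed points of killing at the lifetime.\<close>

lemma muT_cong_kill_tau_Delta:
  assumes levy: "levy_process M X"
    and A': "\<And>w. w \<in> D_set \<Longrightarrow> kill w (tau_Delta w) \<in> A \<longleftrightarrow> w \<in> A'"
  shows "muT M X \<alpha> T A' = muT M X \<alpha> T A"
  unfolding muT_def
proof (rule nn_integral_cong)
  fix t :: real
  show "(\<integral>\<^sup>+ \<omega>. ennreal (exp (\<alpha> * leftlim (\<lambda>s. X s \<omega>) t)) * indicator A' (kill (path_of X \<omega>) (ereal t)) \<partial>M)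
      * indicator {0..T} t
    = (\<integral>\<^sup>+ \<omega>. ennreal (exp (\<alpha> * leftlim (\<lambda>s. X s \<omega>) t)) * indicator A (kill (path_of X \<omega>) (ereal t)) \<partial>M)
      * indicator {0..T} t"
  proof (cases "t \<ge> 0")
    case t: True
    have "kill (path_of X \<omega>) (ereal t) \<in> A' \<longleftrightarrow> kill (path_of X \<omega>) (ereal t) \<in> A"
      if "\<omega> \<in> space M" for \<omega>
    proof -
      have "kill (path_of X \<omega>) (ereal t) \<in> D_set"
        using levy that t unfolding levy_process_def path_of_eq_lift
        by (intro kill_cadlag_in_D_set) auto
      from A'[OF this] show ?thesis
        using kill_tau_Delta_kill_lift[OF t, of "\<lambda>s. X s \<omega>"] by (simp add: path_of_eq_lift)
    qed
    then show ?thesis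
      by (intro arg_cong2[where f="(*)"] nn_integral_cong refl) (simp add: indicator_def)
  qed simp
qed

lemma emeasure_kill_tau_Delta_eq_muT:
  assumes levy: "levy_process M X"
    and Zt_meas: "Zt \<in> measurable M1 path_M"
    and Zt_D: "\<forall>\<omega>\<in>space M1. Zt \<omega> \<in> D_set"
    and Zt_law: "\<forall>A\<in>sets path_M. emeasure M1 (Zt -` A \<inter> space M1) = muT M X \<alpha> T A / c"
    and A: "A \<in> sets path_M"
  shows "emeasure M1 ((\<lambda>\<omega>. kill (Zt \<omega>) (tau_Delta (Zt \<omega>))) -` A \<inter> space M1) = muT M X \<alpha> T A / c"
proof -
  have "(\<lambda>w. kill w (tau_Delta w)) -` A \<inter> space (restrict_space path_M D_set)
      \<in> sets (restrict_space path_M D_set)"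
    using measurable_kill_tau_Delta A by (rule measurable_sets)
  then obtain A' where A': "A' \<in> sets path_M"
    and eq: "(\<lambda>w. kill w (tau_Delta w)) -` A \<inter> space (restrict_space path_M D_set) = D_set \<inter> A'"
    unfolding sets_restrict_space by auto
  have space_D: "space (restrict_space path_M D_set) = D_set"
    using D_set_subset_space_path_M by (auto simp: space_restrict_space)
  have A'_iff: "kill w (tau_Delta w) \<in> A \<longleftrightarrow> w \<in> A'" if "w \<in> D_set" for w
    using eq that space_D by blast
  have "(\<lambda>\<omega>. kill (Zt \<omega>) (tau_Delta (Zt \<omega>))) -` A \<inter> space M1 = Zt -` A' \<inter> space M1"
    using A'_iff Zt_D by auto
  then show ?thesis
    using Zt_law A' muT_cong_kill_tau_Delta[OF levy A'_iff] by simp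
qed

text \<open>Evaluating the Esscher identity on the whole path space, where the left side is 1,
  forces the exponential moment to be finite: otherwise its Bochner integral would be 0.\<close>

lemma esscher_integrable:
  assumes N: "prob_space N"
    and esscher: "\<forall>s\<ge>0. \<forall>B\<in>sets (PiM {0..s} (\<lambda>_. borel)).
        measure N {\<omega>\<in>space N. (\<lambda>v\<in>{0..s}. Z v \<omega>) \<in> B}
          = exp (- \<psi> * s) * (\<integral>\<omega>. exp (\<alpha> * X s \<omega>) * indicator B (\<lambda>v\<in>{0..s}. X v \<omega>) \<partial>M)"
    and t: "t \<ge> 0"
  shows "integrable M (\<lambda>\<omega>. exp (\<alpha> * X t \<omega>))"
proof (rule ccontr)
  assume not_int: "\<not> integrable M (\<lambda>\<omega>. exp (\<alpha> * X t \<omega>))"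
  let ?S = "space (PiM {0..t} (\<lambda>_. (borel :: real measure)))"
  have "measure N {\<omega>\<in>space N. (\<lambda>v\<in>{0..t}. Z v \<omega>) \<in> ?S}
      = exp (- \<psi> * t) * (\<integral>\<omega>. exp (\<alpha> * X t \<omega>) * indicator ?S (\<lambda>v\<in>{0..t}. X v \<omega>) \<partial>M)"
    using esscher t by blast
  then have "1 = exp (- \<psi> * t) * (\<integral>\<omega>. exp (\<alpha> * X t \<omega>) \<partial>M)"
    using prob_space.prob_space[OF N] by (simp add: space_PiM)
  with not_integrable_integral_eq[OF not_int] show False by simp
qed

lemma emeasure_kill_esscher:
  assumes N: "prob_space N"
    and esscher: "\<forall>s\<ge>0. \<forall>B\<in>sets (PiM {0..s} (\<lambda>_. borel)).
        measure N {\<omega>\<in>space N. (\<lambda>v\<in>{0..s}. Z v \<omega>) \<in> B}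
          = exp (- \<psi> * s) * (\<integral>\<omega>. exp (\<alpha> * X s \<omega>) * indicator B (\<lambda>v\<in>{0..s}. X v \<omega>) \<partial>M)"
    and X_meas: "\<And>s. s \<ge> 0 \<Longrightarrow> X s \<in> borel_measurable M"
    and t: "t \<ge> 0" and A: "A \<in> sets path_M"
  shows "emeasure N {\<omega>\<in>space N. kill (path_of Z \<omega>) (ereal t) \<in> A}
    = ennreal (exp (- \<psi> * t)) * (\<integral>\<^sup>+ \<omega>. ennreal (exp (\<alpha> * X t \<omega>))
        * indicator A (kill (path_of X \<omega>) (ereal t)) \<partial>M)"
proof -
  interpret N: prob_space N by fact
  define B where "B = (\<lambda>v. kill (\<lambda>s\<in>{0..}. Some (v s)) (ereal t)) -` A \<inter> space (PiM {0..t} (\<lambda>_. borel))"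
  have B: "B \<in> sets (PiM {0..t} (\<lambda>_. borel))"
    unfolding B_def using measurable_kill_lift_PiM A by (rule measurable_sets)
  have kill_B: "kill (path_of Y \<omega>) (ereal t) \<in> A \<longleftrightarrow> (\<lambda>v\<in>{0..t}. Y v \<omega>) \<in> B" for Y :: "real \<Rightarrow> 'x \<Rightarrow> real" and \<omega>
    using kill_lift_restrict[OF t, of "\<lambda>s. Y s \<omega>"] by (auto simp: B_def space_PiM path_of_eq_lift)
  have integrable: "integrable M (\<lambda>\<omega>. exp (\<alpha> * X t \<omega>) * indicator B (\<lambda>v\<in>{0..t}. X v \<omega>))"
  proof (rule Bochner_Integration.integrable_bound)
    show "integrable M (\<lambda>\<omega>. exp (\<alpha> * X t \<omega>))" using N esscher t by (rule esscher_integrable)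
    show "(\<lambda>\<omega>. exp (\<alpha> * X t \<omega>) * indicator B (\<lambda>v\<in>{0..t}. X v \<omega>)) \<in> borel_measurable M"
      using X_meas t B by measurable
  qed (auto simp: indicator_def)
  have "emeasure N {\<omega>\<in>space N. kill (path_of Z \<omega>) (ereal t) \<in> A}
      = ennreal (exp (- \<psi> * t)) * ennreal (\<integral>\<omega>. exp (\<alpha> * X t \<omega>) * indicator B (\<lambda>v\<in>{0..t}. X v \<omega>) \<partial>M)"
    using esscher t B by (simp add: kill_B N.emeasure_eq_measure ennreal_mult integral_nonneg_AE)
  also have "ennreal (\<integral>\<omega>. exp (\<alpha> * X t \<omega>) * indicator B (\<lambda>v\<in>{0..t}. X v \<omega>) \<partial>M)
      = (\<integral>\<^sup>+ \<omega>. ennreal (exp (\<alpha> * X t \<omega>) * indicator B (\<lambda>v\<in>{0..t}. X v \<omega>)) \<partial>M)"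
    using integrable by (rule nn_integral_eq_integral[symmetric]) simp
  also have "\<dots> = (\<integral>\<^sup>+ \<omega>. ennreal (exp (\<alpha> * X t \<omega>)) * indicator A (kill (path_of X \<omega>) (ereal t)) \<partial>M)"
    by (intro nn_integral_cong) (simp add: kill_B indicator_def)
  finally show ?thesis .
qed

text \<open>Unlike \<open>indep_var_distribution_eq\<close>, the two random variables may take values in
  different types.\<close>

lemma (in prob_space) distr_pair_indep_set:
  assumes indep: "indep_set (sigma_sets (space M) {X -` A \<inter> space M | A. A \<in> sets S})
      (sigma_sets (space M) {Y -` A \<inter> space M | A. A \<in> sets T})"
    and X: "random_variable S X" and Y: "random_variable T Y"
  shows "distr M (S \<Otimes>\<^sub>M T) (\<lambda>x. (X x, Y x)) = distr M S X \<Otimes>\<^sub>M distr M T Y"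
proof (rule pair_measure_eqI[symmetric])
  interpret PX: prob_space "distr M S X" using X by (rule prob_space_distr)
  interpret PY: prob_space "distr M T Y" using Y by (rule prob_space_distr)
  show "sigma_finite_measure (distr M S X)" "sigma_finite_measure (distr M T Y)"
    by unfold_locales
  fix A B assume "A \<in> sets (distr M S X)" "B \<in> sets (distr M T Y)"
  then have A: "A \<in> sets S" and B: "B \<in> sets T" by auto
  have "prob ((X -` A \<inter> space M) \<inter> (Y -` B \<inter> space M))
      = prob (X -` A \<inter> space M) * prob (Y -` B \<inter> space M)"
    using A B by (intro indep_setD[OF indep] sigma_sets.Basic) blast+
  moreover have "(\<lambda>x. (X x, Y x)) -` (A \<times> B) \<inter> space M = (X -` A \<inter> space M) \<inter> (Y -` B \<inter> space M)"
    by auto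
  ultimately show "emeasure (distr M S X) A * emeasure (distr M T Y) B
      = emeasure (distr M (S \<Otimes>\<^sub>M T) (\<lambda>x. (X x, Y x))) (A \<times> B)"
    using A B X Y by (simp add: emeasure_distr emeasure_eq_measure ennreal_mult)
qed simp

lemma measurable_emeasure_kill_path_of:
  assumes N: "prob_space N"
    and Z_meas: "\<forall>v\<ge>0. Z v \<in> borel_measurable N"
    and A: "A \<in> sets path_M"
  shows "(\<lambda>t. emeasure N {\<omega>\<in>space N. kill (path_of Z \<omega>) (ereal t) \<in> A}) \<in> borel_measurable borel"
proof -
  interpret N: prob_space N by fact
  have "(\<lambda>p. kill (path_of Z (snd p)) (ereal (fst p))) \<in> measurable (borel \<Otimes>\<^sub>M N) path_M"
    unfolding path_of_eq_lift using Z_meas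
    by (intro measurable_kill_lift) (auto intro: measurable_compose[OF measurable_snd])
  then have S: "{p \<in> space (borel \<Otimes>\<^sub>M N). kill (path_of Z (snd p)) (ereal (fst p)) \<in> A}
      \<in> sets (borel \<Otimes>\<^sub>M N)"
    using A by measurable
  have "Pair t -` {p \<in> space (borel \<Otimes>\<^sub>M N). kill (path_of Z (snd p)) (ereal (fst p)) \<in> A}
      = {\<omega>\<in>space N. kill (path_of Z \<omega>) (ereal t) \<in> A}" for t
    by (auto simp: space_pair_measure)
  with N.measurable_emeasure_Pair[OF S] show ?thesis by simp
qed

lemma emeasure_kill_at_independent_time:
  fixes Z :: "real \<Rightarrow> 'c \<Rightarrow> real" and \<tau> :: "'c \<Rightarrow> real"
  assumes N: "prob_space N"
    and Z_meas: "\<forall>v\<ge>0. Z v \<in> borel_measurable N"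
    and indep: "prob_space.indep_set N
        (sigma_sets (space N) {\<tau> -` A \<inter> space N | A. A \<in> sets borel})
        (sigma_sets (space N) {(\<lambda>\<omega>. \<lambda>v\<in>{0..}. Z v \<omega>) -` A \<inter> space N
                                | A. A \<in> sets (PiM {0..} (\<lambda>_. (borel :: real measure)))})"
    and \<tau>: "distributed N lborel \<tau> f"
    and A: "A \<in> sets path_M"
  shows "emeasure N ((\<lambda>\<omega>. kill (path_of Z \<omega>) (ereal (\<tau> \<omega>))) -` A \<inter> space N)
    = (\<integral>\<^sup>+ t. f t * emeasure N {\<omega>\<in>space N. kill (path_of Z \<omega>) (ereal t) \<in> A} \<partial>lborel)"
proof -
  interpret N: prob_space N by fact
  define P where "P = PiM {0::real..} (\<lambda>_. (borel :: real measure))"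
  define Y where "Y = (\<lambda>\<omega>. \<lambda>v\<in>{0..}. Z v \<omega>)"
  define H where "H = (\<lambda>p. kill (\<lambda>s\<in>{0..}. Some (snd p s)) (ereal (fst p)))"
  have \<tau>_meas: "\<tau> \<in> borel_measurable N"
    using distributed_measurable[OF \<tau>] by (simp cong: measurable_cong_sets)
  have Y_meas: "Y \<in> measurable N P" unfolding Y_def P_def using Z_meas by (intro measurable_restrict) auto
  interpret PY: prob_space "distr N P Y" by (rule N.prob_space_distr[OF Y_meas])
  have joint: "distr N (borel \<Otimes>\<^sub>M P) (\<lambda>\<omega>. (\<tau> \<omega>, Y \<omega>)) = distr N borel \<tau> \<Otimes>\<^sub>M distr N P Y"
    using indep \<tau>_meas Y_meas unfolding Y_def P_def by (rule N.distr_pair_indep_set)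
  define Sh where "Sh = H -` A \<inter> space (borel \<Otimes>\<^sub>M P)"
  have Sh: "Sh \<in> sets (borel \<Otimes>\<^sub>M P)"
    unfolding Sh_def H_def P_def using measurable_kill_lift_pair A by (rule measurable_sets)
  have kill_H: "kill (path_of Z \<omega>) (ereal t) = H (t, Y \<omega>)" for \<omega> t
    by (simp add: H_def Y_def path_of_eq_lift cong: restrict_cong)
  have slice: "emeasure (distr N P Y) (Pair t -` Sh) = emeasure N {\<omega>\<in>space N. kill (path_of Z \<omega>) (ereal t) \<in> A}" for t
  proof -
    have "Pair t -` Sh \<in> sets P" using Sh by (rule sets_Pair1)
    then have "emeasure (distr N P Y) (Pair t -` Sh) = emeasure N (Y -` (Pair t -` Sh) \<inter> space N)"
      by (rule emeasure_distr[OF Y_meas])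
    also have "Y -` (Pair t -` Sh) \<inter> space N = {\<omega>\<in>space N. kill (path_of Z \<omega>) (ereal t) \<in> A}"
      using measurable_space[OF Y_meas] by (auto simp: Sh_def kill_H space_pair_measure)
    finally show ?thesis .
  qed
  have "emeasure N ((\<lambda>\<omega>. kill (path_of Z \<omega>) (ereal (\<tau> \<omega>))) -` A \<inter> space N)
      = emeasure (distr N (borel \<Otimes>\<^sub>M P) (\<lambda>\<omega>. (\<tau> \<omega>, Y \<omega>))) Sh"
    using measurable_space[OF Y_meas] \<tau>_meas Y_meas Sh
    by (subst emeasure_distr) (auto simp: Sh_def kill_H space_pair_measure intro!: arg_cong[where f="emeasure N"])
  also have "\<dots> = (\<integral>\<^sup>+ t. emeasure (distr N P Y) (Pair t -` Sh) \<partial>distr N borel \<tau>)"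
    unfolding joint using Sh by (intro PY.emeasure_pair_measure_alt) simp
  also have "distr N borel \<tau> = density lborel f"
    using distributed_distr_eq_density[OF \<tau>] by (simp add: distr_cong[of N N borel lborel])
  also have "(\<integral>\<^sup>+ t. emeasure (distr N P Y) (Pair t -` Sh) \<partial>density lborel f)
      = (\<integral>\<^sup>+ t. f t * emeasure (distr N P Y) (Pair t -` Sh) \<partial>lborel)"
    using distributed_borel_measurable[OF \<tau>] PY.measurable_emeasure_Pair[of Sh] Sh
    by (intro nn_integral_density) (auto cong: measurable_cong_sets)
  finally show ?thesis by (simp add: slice)
qed

lemma emeasure_kill_esscher_at_independent_time:
  fixes Z :: "real \<Rightarrow> 'c \<Rightarrow> real" and \<tau> :: "'c \<Rightarrow> real"
  assumes N: "prob_space N"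
    and X_meas: "\<And>s. s \<ge> 0 \<Longrightarrow> X s \<in> borel_measurable M"
    and Z_meas: "\<forall>v\<ge>0. Z v \<in> borel_measurable N"
    and esscher: "\<forall>s\<ge>0. \<forall>B\<in>sets (PiM {0..s} (\<lambda>_. borel)).
        measure N {\<omega>\<in>space N. (\<lambda>v\<in>{0..s}. Z v \<omega>) \<in> B}
          = exp (- \<psi> * s) * (\<integral>\<omega>. exp (\<alpha> * X s \<omega>) * indicator B (\<lambda>v\<in>{0..s}. X v \<omega>) \<partial>M)"
    and indep: "prob_space.indep_set N
        (sigma_sets (space N) {\<tau> -` A \<inter> space N | A. A \<in> sets borel})
        (sigma_sets (space N) {(\<lambda>\<omega>. \<lambda>v\<in>{0..}. Z v \<omega>) -` A \<inter> space N
                                | A. A \<in> sets (PiM {0..} (\<lambda>_. (borel :: real measure)))})"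
    and \<tau>: "distributed N lborel \<tau> (\<lambda>t. ennreal (indicator {0..<T} t * exp (\<psi> * t)) / c)"
    and A: "A \<in> sets path_M"
  shows "emeasure N ((\<lambda>\<omega>. kill (path_of Z \<omega>) (ereal (\<tau> \<omega>))) -` A \<inter> space N)
    = (\<integral>\<^sup>+ t\<in>{0..T}. (\<integral>\<^sup>+ \<omega>. ennreal (exp (\<alpha> * X t \<omega>))
        * indicator A (kill (path_of X \<omega>) (ereal t)) \<partial>M) \<partial>lborel) / c"
proof -
  define J where "J t = (\<integral>\<^sup>+ \<omega>. ennreal (exp (\<alpha> * X t \<omega>)) * indicator A (kill (path_of X \<omega>) (ereal t)) \<partial>M)" for t
  have "emeasure N ((\<lambda>\<omega>. kill (path_of Z \<omega>) (ereal (\<tau> \<omega>))) -` A \<inter> space N)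
      = (\<integral>\<^sup>+ t. ennreal (indicator {0..<T} t * exp (\<psi> * t)) / c
          * emeasure N {\<omega>\<in>space N. kill (path_of Z \<omega>) (ereal t) \<in> A} \<partial>lborel)"
    using N Z_meas indep \<tau> A by (rule emeasure_kill_at_independent_time)
  also have "\<dots> = (\<integral>\<^sup>+ t. ennreal (indicator {0..<T} t * exp (\<psi> * t))
          * emeasure N {\<omega>\<in>space N. kill (path_of Z \<omega>) (ereal t) \<in> A} / c \<partial>lborel)"
    by (simp add: divide_ennreal_def ac_simps)
  also have "\<dots> = (\<integral>\<^sup>+ t. ennreal (indicator {0..<T} t * exp (\<psi> * t))
          * emeasure N {\<omega>\<in>space N. kill (path_of Z \<omega>) (ereal t) \<in> A} \<partial>lborel) / c"
    using measurable_emeasure_kill_path_of[OF N Z_meas A]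
    by (intro nn_integral_divide) (simp cong: measurable_cong_sets)
  also have "(\<integral>\<^sup>+ t. ennreal (indicator {0..<T} t * exp (\<psi> * t))
          * emeasure N {\<omega>\<in>space N. kill (path_of Z \<omega>) (ereal t) \<in> A} \<partial>lborel)
      = (\<integral>\<^sup>+ t\<in>{0..T}. J t \<partial>lborel)"
  proof (rule nn_integral_cong_AE)
    show "AE t in lborel. ennreal (indicator {0..<T} t * exp (\<psi> * t))
        * emeasure N {\<omega>\<in>space N. kill (path_of Z \<omega>) (ereal t) \<in> A} = J t * indicator {0..T} t"
      using AE_lborel_singleton[of T]
    proof eventually_elim
      case (elim t)
      show ?case
      proof (cases "t \<in> {0..<T}")
        case True
        have "ennreal (exp (\<psi> * t)) * ennreal (exp (- \<psi> * t)) = 1"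
          by (simp flip: ennreal_mult exp_add)
        then show ?thesis
          using True emeasure_kill_esscher[OF N esscher X_meas _ A, of t]
          by (simp add: J_def mult.assoc[symmetric])
      qed (use elim in \<open>auto simp: indicator_def\<close>)
    qed
  qed
  finally show ?thesis unfolding J_def .
qed

theorem proposition6p1:
  fixes M :: "'a measure" and X :: "real \<Rightarrow> 'a \<Rightarrow> real"
    and M1 :: "'b measure" and Zt :: "'b \<Rightarrow> (real \<Rightarrow> real option)"
    and N :: "'c measure" and Z :: "real \<Rightarrow> 'c \<Rightarrow> real" and \<tau> :: "'c \<Rightarrow> real"
    and \<alpha> T :: real
  assumes alpha_pos: "\<alpha> > 0"
    and levy: "levy_process M X"
    and exp_mom: "integrable M (\<lambda>\<omega>. exp (\<alpha> * X 1 \<omega>))"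
    and T_pos: "T > 0"
    and M1_prob: "prob_space M1"
    and Zt_meas: "Zt \<in> measurable M1 path_M"
    and Zt_D: "\<forall>\<omega>\<in>space M1. Zt \<omega> \<in> D_set"
    and Zt_law: "\<forall>A\<in>sets path_M.
        emeasure M1 (Zt -` A \<inter> space M1) = muT M X \<alpha> T A / muT_total M X \<alpha> T"
    and N_prob: "prob_space N"
    and Z_meas: "\<forall>v\<ge>0. Z v \<in> borel_measurable N"
    and Z_esscher: "\<forall>s\<ge>0. \<forall>B\<in>sets (PiM {0..s} (\<lambda>_. borel)).
        measure N {\<omega>\<in>space N. (\<lambda>v\<in>{0..s}. Z v \<omega>) \<in> B}
          = exp (- levy_psi M X \<alpha> * s) *
            (\<integral>\<omega>. exp (\<alpha> * X s \<omega>) * indicator B (\<lambda>v\<in>{0..s}. X v \<omega>) \<partial>M)"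
    and tau_indep: "prob_space.indep_set N
        (sigma_sets (space N) {\<tau> -` A \<inter> space N | A. A \<in> sets borel})
        (sigma_sets (space N) {(\<lambda>\<omega>. \<lambda>v\<in>{0..}. Z v \<omega>) -` A \<inter> space N
                                | A. A \<in> sets (PiM {0..} (\<lambda>_. (borel :: real measure)))})"
    and tau_distr: "distributed N lborel \<tau>
        (\<lambda>t. ennreal (indicator {0..<T} t * exp (levy_psi M X \<alpha> * t)) / muT_total M X \<alpha> T)"
  shows "distr M1 path_M (\<lambda>\<omega>. kill (Zt \<omega>) (tau_Delta (Zt \<omega>)))
       = distr N path_M (\<lambda>\<omega>. kill (path_of Z \<omega>) (ereal (\<tau> \<omega>)))"
proof (rule measure_eqI)
  fix A assume "A \<in> sets (distr M1 path_M (\<lambda>\<omega>. kill (Zt \<omega>) (tau_Delta (Zt \<omega>))))"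
  then have A: "A \<in> sets path_M" by simp
  have X_meas: "\<And>s. s \<ge> 0 \<Longrightarrow> X s \<in> borel_measurable M"
    using levy unfolding levy_process_def by simp
  have kill_Zt_meas: "(\<lambda>\<omega>. kill (Zt \<omega>) (tau_Delta (Zt \<omega>))) \<in> measurable M1 path_M"
    using Zt_meas Zt_D
    by (intro measurable_compose[OF measurable_restrict_space2 measurable_kill_tau_Delta]) auto
  have kill_Z_meas: "(\<lambda>\<omega>. kill (path_of Z \<omega>) (ereal (\<tau> \<omega>))) \<in> measurable N path_M"
    unfolding path_of_eq_lift using Z_meas distributed_measurable[OF tau_distr]
    by (intro measurable_kill_lift) (auto cong: measurable_cong_sets)
  have "emeasure (distr M1 path_M (\<lambda>\<omega>. kill (Zt \<omega>) (tau_Delta (Zt \<omega>)))) A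
      = muT M X \<alpha> T A / muT_total M X \<alpha> T"
    using kill_Zt_meas A emeasure_kill_tau_Delta_eq_muT[OF levy Zt_meas Zt_D Zt_law A]
    by (simp add: emeasure_distr)
  also have "\<dots> = emeasure (distr N path_M (\<lambda>\<omega>. kill (path_of Z \<omega>) (ereal (\<tau> \<omega>)))) A"
    using kill_Z_meas A muT_eq_integral_value[OF levy]
      emeasure_kill_esscher_at_independent_time[OF N_prob X_meas Z_meas Z_esscher tau_indep tau_distr A]
    by (simp add: emeasure_distr)
  finally show "emeasure (distr M1 path_M (\<lambda>\<omega>. kill (Zt \<omega>) (tau_Delta (Zt \<omega>)))) A
      = emeasure (distr N path_M (\<lambda>\<omega>. kill (path_of Z \<omega>) (ereal (\<tau> \<omega>)))) A" .
qed simp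

end
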